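(* Let $m, n$ be positive integers with $m \mid n$, let $N < 2^n$ be an odd positive integer, and let $x < 2^m$ be a positive integer. Write $x = 2^t x'$ with $t \ge 0$ and $x'$ odd. Let $x_{\mathrm{minv}}$ be the inverse of $x'$ modulo $2^m$, set $z_0 = 0$ and for $j = 0, 1, \ldots, \frac{n-2m}{m}$ define $N_j = \lfloor N/2^{jm}\rfloor \bmod 2^m$, $\mathsf{ctrl}_j = [x_{\mathrm{minv}}(N_j - z_j)] \bmod 2^m \in [0,2^m-1]$, $z'_j = z_j + \mathsf{ctrl}_j\cdot x'$, $z_{j+1} = \lfloor z'_j/2^m\rfloor$. Let $z = z_{(n-m)/m}$, $s = \lfloor N/2^{n-m}\rfloor - z$, and $$\mathsf{out} = \left((-1)^{\frac{N^2-1}{8}}\right)^{t}\cdot (-1)^{\frac{(x'-1)(N-1)}{4}}\cdot\left((-1)^{\frac{x'^2-1}{8}}\right)^{n-m}\cdot\left(\frac{s}{x'}\right).$$ Then $\mathsf{out} = \left(\frac{x}{N}\right)$, and moreover $|s| < 2^m$.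
   Context: $\left(\frac{a}{b}\right)$ denotes the Jacobi symbol, defined for any integer $a$ (possibly negative) and odd positive integer $b = p_1^{e_1}\cdots p_k^{e_k}$ by $\left(\frac{a}{b}\right) = \prod_i \left(\frac{a}{p_i}\right)^{e_i}$, where the Legendre symbol $\left(\frac{a}{p}\right)$ is $0$ if $p\mid a$, $1$ if $a$ is a nonzero quadratic residue mod $p$, and $-1$ otherwise. *)

theory Defs
  imports "HOL-Number_Theory.Number_Theory"
begin

definition Jacobi :: "int \<Rightarrow> int \<Rightarrow> int" where
  "Jacobi a b = (\<Prod>p\<in>prime_factors (nat b). Legendre a (int p) ^ multiplicity p (nat b))"

end

theory Submission
  imports Defs
begin

text \<open>
  The recurrence is digit-by-digit Montgomery (Hensel) division of \<open>N\<close> by \<open>x'\<close>: each control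
  value is the multiple of \<open>x'\<close> that makes the low \<open>m\<close> bits of the running value equal to the
  next digit of \<open>N\<close>, so those bits can be shifted out exactly. By induction the carry stays in
  \<open>[0, x')\<close> and \<open>z\<^sub>j 2\<^bsup>jm\<^esup> + (N mod 2\<^bsup>jm\<^esup>)\<close> is a multiple of \<open>x'\<close>; at the last
  step this gives \<open>N \<equiv> s 2\<^bsup>n-m\<^esup> (mod x')\<close> with \<open>|s| < 2\<^sup>m\<close>. The formula for
  \<open>(x/N) = (2/N)\<^sup>t (x'/N)\<close> then follows from Jacobi reciprocity, the second supplementary law
  and the fact that \<open>(\<cdot>/x')\<close> is multiplicative and only depends on residues mod \<open>x'\<close>; these
  Jacobi symbol laws are lifted from the Legendre case along the prime factorisation of the
  odd modulus.
\<close>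

lemma cong_eq_if_abs_le_one:
  fixes x y :: int
  assumes "\<bar>x\<bar> \<le> 1" "\<bar>y\<bar> \<le> 1" "[x = y] (mod p)" "2 < p"
  shows "x = y"
proof (rule ccontr)
  assume "x \<noteq> y"
  moreover have "p dvd x - y" using assms(3) by (simp add: cong_iff_dvd_diff)
  ultimately have "\<bar>p\<bar> \<le> \<bar>x - y\<bar>" by (intro dvd_imp_le_int) auto
  then show False using assms by linarith
qed

lemma abs_Legendre_le_one: "\<bar>Legendre a p\<bar> \<le> 1"
  by (simp add: Legendre_def)

lemma Legendre_mult:
  assumes "prime p" "2 < p"
  shows "Legendre (a * b) (int p) = Legendre a (int p) * Legendre b (int p)"
proof -
  have "[Legendre (a * b) (int p) = (a * b) ^ ((p - 1) div 2)] (mod int p)"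
    "[Legendre a (int p) * Legendre b (int p) = a ^ ((p - 1) div 2) * b ^ ((p - 1) div 2)] (mod int p)"
    using euler_criterion assms by (blast intro: cong_mult)+
  then have "[Legendre (a * b) (int p) = Legendre a (int p) * Legendre b (int p)] (mod int p)"
    by (metis cong_sym cong_trans power_mult_distrib)
  then show ?thesis
    using assms(2) by (intro cong_eq_if_abs_le_one) (auto simp: abs_Legendre_le_one abs_mult mult_le_one)
qed

lemma Legendre_cong:
  assumes "[a = b] (mod p)"
  shows "Legendre a p = Legendre b p"
proof -
  have "[c = a] (mod p) \<longleftrightarrow> [c = b] (mod p)" for c
    using assms cong_sym cong_trans by meson
  then show ?thesis
    by (simp add: Legendre_def QuadRes_def cong_sym_eq[of _ 0])
qed

lemma Legendre_one_left:
  assumes "prime p"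
  shows "Legendre 1 (int p) = 1"
proof -
  have "QuadRes (int p) 1" unfolding QuadRes_def by (rule exI[of _ 1]) simp
  then show ?thesis
    using prime_gt_1_nat[OF assms] by (simp add: Legendre_def cong_0_iff)
qed

lemma even_second_supplement_exponent:
  fixes h :: nat
  shows "even (((2 * h + 1)^2 - 1) div 8) \<longleftrightarrow> even (h - h div 2)"
proof -
  obtain k r where h: "h = 4 * k + r" and "r < 4"
    using div_mod_decomp[of h 4] mod_less_divisor by (metis mult.commute zero_less_numeral)
  have "((2 * h + 1)^2 - 1) div 8 = 2 * (4 * k * k + k + 2 * k * r) + r * (r + 1) div 2"
    unfolding h by (simp add: power2_eq_square algebra_simps)
  moreover have "h - h div 2 = 2 * k + (r - r div 2)"
    unfolding h by simp
  moreover have "r = 0 \<or> r = 1 \<or> r = 2 \<or> r = 3"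
    using \<open>r < 4\<close> by linarith
  ultimately show ?thesis by auto
qed

lemma Legendre_two:
  assumes "prime p" "2 < p"
  shows "Legendre 2 (int p) = (-1) ^ ((p^2 - 1) div 8)"
proof -
  interpret GAUSS p 2
    using assms by unfold_locales (auto simp: cong_0_iff dest: zdvd_imp_le)
  define h where "h = (p - 1) div 2"
  have p: "p = 2 * h + 1" using odd_p by (auto simp: h_def elim!: oddE)
  \<comment> \<open>for \<open>0 < x \<le> h\<close> we have \<open>2x < p\<close>, so Gauss's residues \<open>2x mod p\<close> are just \<open>2x\<close>\<close>
  have "E = (\<lambda>x. 2 * x) ` {int (h div 2) <.. int h}"
    unfolding E_def C_def B_def A_def using p by (force simp: image_iff)
  then have "card E = h - h div 2" by (simp add: card_image inj_on_def)
  then show ?thesis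
    using gauss_lemma even_second_supplement_exponent[of h] by (simp add: p minus_one_power_iff)
qed

definition reciprocity_sign :: "nat \<Rightarrow> nat \<Rightarrow> int" where
  "reciprocity_sign a b = (-1) ^ (((a - 1) div 2) * ((b - 1) div 2))"

lemma reciprocity_sign_commute: "reciprocity_sign a b = reciprocity_sign b a"
  by (simp add: reciprocity_sign_def mult.commute)

lemma reciprocity_sign_mult:
  assumes "odd a" "odd b"
  shows "reciprocity_sign (a * b) c = reciprocity_sign a c * reciprocity_sign b c"
proof -
  obtain A B where "a = 2 * A + 1" "b = 2 * B + 1"
    using assms by (meson oddE)
  moreover from this have "(a * b - 1) div 2 = 2 * (A * B) + A + B"
    by (simp add: algebra_simps)
  ultimately show ?thesis
    by (simp add: reciprocity_sign_def minus_one_power_iff algebra_simps)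
qed

lemma reciprocity_sign_eq:
  assumes "odd a" "odd b"
  shows "reciprocity_sign a b = (-1) ^ (((a - 1) * (b - 1)) div 4)"
proof -
  obtain A B where "a = 2 * A + 1" "b = 2 * B + 1"
    using assms by (meson oddE)
  then show ?thesis by (simp add: reciprocity_sign_def)
qed

lemma Legendre_reciprocity:
  assumes "prime p" "2 < p" "prime q" "2 < q"
  shows "Legendre (int p) (int q) = reciprocity_sign p q * Legendre (int q) (int p)"
proof (cases "p = q")
  case True
  then show ?thesis by (simp add: Legendre_def cong_0_iff)
next
  case False
  then have "\<not> int p dvd int q"
    using assms by (auto dest: primes_dvd_imp_eq)
  then have "Legendre (int q) (int p) ^ 2 = 1" by (auto simp: Legendre_def cong_0_iff)
  then show ?thesis
    using Quadratic_Reciprocity[OF assms False]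
    by (simp add: reciprocity_sign_def power2_eq_square) (metis mult.assoc mult.right_neutral)
qed

lemma odd_nat_induct [consumes 1, case_names one prime mult]:
  fixes n :: nat
  assumes "odd n"
    and "P 1"
    and "\<And>p. prime p \<Longrightarrow> 2 < p \<Longrightarrow> P p"
    and "\<And>a b. odd a \<Longrightarrow> odd b \<Longrightarrow> P a \<Longrightarrow> P b \<Longrightarrow> P (a * b)"
  shows "P n"
  using assms(1)
proof (induction n rule: less_induct)
  case (less n)
  show ?case
  proof (cases "n = 1")
    case True
    then show ?thesis using assms(2) by simp
  next
    case False
    then obtain p q where p: "prime p" and n: "n = p * q"
      using prime_factor_nat by (metis dvdE)
    with less.prems have "odd p" "odd q" by auto
    with p have "2 < p" using prime_ge_2_nat[of p] by (cases "p = 2") auto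
    moreover from \<open>odd q\<close> have "0 < q" by (rule odd_pos)
    ultimately have "q < n" unfolding n by simp
    with less.IH \<open>odd q\<close> have "P q" by blast
    with assms(3,4) p \<open>2 < p\<close> \<open>odd p\<close> \<open>odd q\<close> show ?thesis unfolding n by blast
  qed
qed

lemma Jacobi_eq_prod_mset: "Jacobi a (int b) = (\<Prod>p\<in>#prime_factorization b. Legendre a (int p))"
  by (auto simp: Jacobi_def image_prod_mset_multiplicity count_prime_factorization_prime
           intro!: prod.cong dest: in_prime_factors_imp_prime)

lemma Jacobi_one_right [simp]: "Jacobi a 1 = 1"
  by (simp add: Jacobi_def)

lemma Jacobi_prime: "prime p \<Longrightarrow> Jacobi a (int p) = Legendre a (int p)"
  by (simp add: Jacobi_eq_prod_mset prime_factorization_prime)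

lemma Jacobi_mult_right:
  assumes "0 < b" "0 < c"
  shows "Jacobi a (int b * int c) = Jacobi a (int b) * Jacobi a (int c)"
  using assms by (simp add: Jacobi_eq_prod_mset prime_factorization_mult flip: of_nat_mult)

lemma Jacobi_mult_left:
  assumes "odd b"
  shows "Jacobi (a * c) (int b) = Jacobi a (int b) * Jacobi c (int b)"
  using assms
  by (induction b rule: odd_nat_induct) (simp_all add: Jacobi_prime Legendre_mult Jacobi_mult_right odd_pos)

lemma Jacobi_cong:
  assumes "odd b" "[a = c] (mod int b)"
  shows "Jacobi a (int b) = Jacobi c (int b)"
  using assms
proof (induction b rule: odd_nat_induct)
  case (mult b b')
  then have "[a = c] (mod int b)" "[a = c] (mod int b')"
    by (auto elim: cong_dvd_modulus)
  with mult show ?case by (simp add: Jacobi_mult_right odd_pos)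
qed (simp_all add: Jacobi_prime Legendre_cong)

lemma Jacobi_one_left:
  assumes "odd b"
  shows "Jacobi 1 (int b) = 1"
  using assms
  by (induction b rule: odd_nat_induct) (simp_all add: Jacobi_prime Legendre_one_left Jacobi_mult_right odd_pos)

lemma Jacobi_power_left:
  assumes "odd b"
  shows "Jacobi (a ^ k) (int b) = Jacobi a (int b) ^ k"
  using assms by (induction k) (simp_all add: Jacobi_one_left Jacobi_mult_left)

lemma odd_square_mod_8:
  fixes a :: nat
  assumes "odd a"
  shows "a^2 mod 8 = 1"
proof -
  obtain k where a: "a = 2 * k + 1" using assms by (meson oddE)
  have "even (k * (k + 1))" by simp
  then obtain j where "k * (k + 1) = 2 * j" by blast
  then have "a^2 = 8 * j + 1"
    unfolding a by (simp add: power2_eq_square algebra_simps)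
  then show ?thesis by simp
qed

lemma second_supplement_sign_mult:
  fixes a b :: nat
  assumes "odd a" "odd b"
  shows "(-1::int) ^ (((a * b)^2 - 1) div 8) = (-1) ^ ((a^2 - 1) div 8) * (-1) ^ ((b^2 - 1) div 8)"
proof -
  define A B where "A = a^2 div 8" and "B = b^2 div 8"
  have A: "a^2 = 8 * A + 1" and B: "b^2 = 8 * B + 1"
    using odd_square_mod_8[OF assms(1)] odd_square_mod_8[OF assms(2)] div_mult_mod_eq[of "a^2" 8]
      div_mult_mod_eq[of "b^2" 8]
    unfolding A_def B_def by linarith+
  have "(a * b)^2 = 8 * (8 * A * B + A + B) + 1"
    by (simp add: A B algebra_simps)
  then show ?thesis by (simp add: A B power_add power_mult)
qed

lemma Jacobi_two:
  assumes "odd b"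
  shows "Jacobi 2 (int b) = (-1) ^ ((b^2 - 1) div 8)"
  using assms
proof (induction b rule: odd_nat_induct)
  case (mult a b)
  then show ?case using second_supplement_sign_mult[of a b] by (simp add: Jacobi_mult_right odd_pos)
qed (simp_all add: Jacobi_prime Legendre_two)

lemma Jacobi_reciprocity_prime:
  assumes "prime p" "2 < p" "odd b"
  shows "Jacobi (int p) (int b) = reciprocity_sign p b * Jacobi (int b) (int p)"
  using assms(3)
proof (induction b rule: odd_nat_induct)
  case one
  then show ?case using assms by (simp add: Jacobi_prime Legendre_one_left reciprocity_sign_def)
next
  case (prime q)
  then show ?case using assms(1) by (simp add: Jacobi_prime Legendre_reciprocity[OF assms(1,2) prime])
next
  case (mult a b)
  have "reciprocity_sign p (a * b) = reciprocity_sign p a * reciprocity_sign p b"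
    using mult reciprocity_sign_mult[of a b p] by (simp add: reciprocity_sign_commute[of p])
  with mult assms show ?case
    by (simp add: Jacobi_mult_right Jacobi_mult_left prime_odd_nat odd_pos)
qed

lemma Jacobi_reciprocity:
  assumes "odd a" "odd b"
  shows "Jacobi (int a) (int b) = reciprocity_sign a b * Jacobi (int b) (int a)"
  using assms(1)
proof (induction a rule: odd_nat_induct)
  case one
  then show ?case using assms by (simp add: Jacobi_one_left reciprocity_sign_def)
next
  case (prime p)
  then show ?case using assms by (simp add: Jacobi_reciprocity_prime)
next
  case (mult x y)
  then show ?case
    using assms reciprocity_sign_mult[of x y b]
    by (simp add: Jacobi_mult_right Jacobi_mult_left odd_pos)
qed

lemma montgomery_step:
  fixes M a ainv z d :: int
  assumes inv: "[a * ainv = 1] (mod M)" and "0 < M" "0 \<le> z" "z < a" "0 \<le> d" "d < M"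
  defines "c \<equiv> (ainv * (d - z)) mod M"
  shows "(z + c * a) div M * M + d = z + c * a"
    and "0 \<le> (z + c * a) div M" and "(z + c * a) div M < a"
proof -
  have "[c * a = ainv * (d - z) * a] (mod M)"
    unfolding c_def by (simp add: cong_def mod_mult_left_eq)
  also have "ainv * (d - z) * a = (a * ainv) * (d - z)" by simp
  also have "[\<dots> = 1 * (d - z)] (mod M)" using inv by (intro cong_mult cong_refl)
  finally have "[z + c * a = z + (d - z)] (mod M)" by (intro cong_add cong_refl) simp
  then have "(z + c * a) mod M = d" using assms by (simp add: cong_def)
  then show quotient: "(z + c * a) div M * M + d = z + c * a" by (metis div_mult_mod_eq)
  have "0 \<le> c" "c \<le> M - 1" using \<open>0 < M\<close> unfolding c_def by simp_all
  then have "0 \<le> z + c * a" "z + c * a < a * M"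
    using assms(3,4) mult_right_mono[of c "M - 1" a] by (simp_all add: algebra_simps)
  then show "0 \<le> (z + c * a) div M"
    using \<open>0 < M\<close> by (simp add: pos_imp_zdiv_nonneg_iff)
  have "(z + c * a) div M * M < a * M"
    using quotient \<open>0 \<le> d\<close> \<open>z + c * a < a * M\<close> by linarith
  then show "(z + c * a) div M < a"
    using \<open>0 < M\<close> by (meson mult_right_less_imp_less less_imp_le)
qed

lemma montgomery_invariant:
  fixes m N a K :: nat and ainv :: int and z :: "nat \<Rightarrow> int"
  assumes inv: "[int a * ainv = 1] (mod 2 ^ m)" and "0 < a" and "z 0 = 0"
    and rec: "\<forall>j. j < K \<longrightarrow>
           z (Suc j) = (z j + ((ainv * (int ((N div 2 ^ (j * m)) mod 2 ^ m) - z j)) mod 2 ^ m)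
                                * int a) div 2 ^ m"
    and "j \<le> K"
  shows "0 \<le> z j \<and> z j < a \<and> int a dvd z j * 2 ^ (j * m) + int (N mod 2 ^ (j * m))"
  using \<open>j \<le> K\<close>
proof (induction j)
  case 0
  then show ?case using \<open>z 0 = 0\<close> \<open>0 < a\<close> by simp
next
  case (Suc j)
  then have IH: "0 \<le> z j" "z j < a" "int a dvd z j * 2 ^ (j * m) + int (N mod 2 ^ (j * m))"
    by simp_all
  define d where "d = int ((N div 2 ^ (j * m)) mod 2 ^ m)"
  define c where "c = (ainv * (d - z j)) mod 2 ^ m"
  have "0 \<le> d" "d < 2 ^ m" unfolding d_def by (simp_all add: of_nat_mod)
  moreover have "z (Suc j) = (z j + c * int a) div 2 ^ m"
    using rec Suc.prems unfolding c_def d_def by simp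
  ultimately have step: "z (Suc j) * 2 ^ m + d = z j + c * int a" "0 \<le> z (Suc j)" "z (Suc j) < a"
    using montgomery_step[OF inv _ IH(1,2), of d] unfolding c_def by simp_all
  have pow: "(2::nat) ^ (Suc j * m) = 2 ^ (j * m) * 2 ^ m"
    by (simp add: power_add mult.commute)
  have "N mod 2 ^ (Suc j * m) = 2 ^ (j * m) * (N div 2 ^ (j * m) mod 2 ^ m) + N mod 2 ^ (j * m)"
    unfolding pow by (rule mod_mult2_eq)
  then have "int (N mod 2 ^ (Suc j * m)) = 2 ^ (j * m) * d + int (N mod 2 ^ (j * m))"
    unfolding d_def by (simp only: of_nat_add of_nat_mult of_nat_power of_nat_numeral)
  moreover have "(2::int) ^ (Suc j * m) = 2 ^ m * 2 ^ (j * m)"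
    by (simp add: power_add)
  ultimately have "z (Suc j) * 2 ^ (Suc j * m) + int (N mod 2 ^ (Suc j * m))
      = (z (Suc j) * 2 ^ m + d) * 2 ^ (j * m) + int (N mod 2 ^ (j * m))"
    by (simp add: algebra_simps)
  also have "\<dots> = (z j + c * int a) * 2 ^ (j * m) + int (N mod 2 ^ (j * m))"
    by (simp only: step(1))
  also have "\<dots> = (z j * 2 ^ (j * m) + int (N mod 2 ^ (j * m))) + int a * (c * 2 ^ (j * m))"
    by (simp only: distrib_right add_ac mult_ac)
  finally show ?case using IH(3) step(2,3) by simp
qed

lemma montgomery_quotient:
  fixes m N a K :: nat and ainv :: int and z :: "nat \<Rightarrow> int"
  assumes "[int a * ainv = 1] (mod 2 ^ m)" and "0 < a" and "a < 2 ^ m" and "z 0 = 0"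
    and "\<forall>j. j < K \<longrightarrow>
           z (Suc j) = (z j + ((ainv * (int ((N div 2 ^ (j * m)) mod 2 ^ m) - z j)) mod 2 ^ m)
                                * int a) div 2 ^ m"
    and "N < 2 ^ (Suc K * m)"
  defines "s \<equiv> int (N div 2 ^ (K * m)) - z K"
  shows "[int N = s * 2 ^ (K * m)] (mod int a)" and "\<bar>s\<bar> < 2 ^ m"
proof -
  have z: "0 \<le> z K" "z K < a" "int a dvd z K * 2 ^ (K * m) + int (N mod 2 ^ (K * m))"
    using montgomery_invariant[OF assms(1,2,4,5) order_refl] by blast+
  have "int N = int (N div 2 ^ (K * m) * 2 ^ (K * m) + N mod 2 ^ (K * m))"
    by (simp only: div_mult_mod_eq)
  then have "int N = int (N div 2 ^ (K * m)) * 2 ^ (K * m) + int (N mod 2 ^ (K * m))"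
    by (simp only: of_nat_add of_nat_mult of_nat_power of_nat_numeral)
  moreover have "s * 2 ^ (K * m) = int (N div 2 ^ (K * m)) * 2 ^ (K * m) - z K * 2 ^ (K * m)"
    unfolding s_def by (rule left_diff_distrib)
  ultimately show "[int N = s * 2 ^ (K * m)] (mod int a)"
    using z(3) unfolding cong_iff_dvd_diff by (smt (verit))
  have "N < 2 ^ m * 2 ^ (K * m)"
    using \<open>N < 2 ^ (Suc K * m)\<close> by (simp add: power_add)
  then have "N div 2 ^ (K * m) < 2 ^ m" by (rule less_mult_imp_div_less)
  with \<open>a < 2 ^ m\<close> have "int (N div 2 ^ (K * m)) < 2 ^ m" "int a < 2 ^ m"
    by simp_all
  with z(1,2) show "\<bar>s\<bar> < 2 ^ m"
    unfolding s_def by linarith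
qed

theorem lemma4p5:
  fixes m n N x t x' :: nat and xminv :: int and z :: "nat \<Rightarrow> int"
  assumes "0 < m" and "0 < n" and "m dvd n"
    and "odd N" and "0 < N" and "N < 2 ^ n"
    and "0 < x" and "x < 2 ^ m"
    and "x = 2 ^ t * x'" and "odd x'"
    and "[int x' * xminv = 1] (mod 2 ^ m)"
    and "z 0 = 0"
    and "\<forall>j. j < n div m - 1 \<longrightarrow>
           z (Suc j) = (z j + ((xminv * (int ((N div 2 ^ (j * m)) mod 2 ^ m) - z j)) mod 2 ^ m)
                                * int x') div 2 ^ m"
  shows "let s = int (N div 2 ^ (n - m)) - z (n div m - 1) in
         ((-1) ^ ((N\<^sup>2 - 1) div 8)) ^ t * (-1) ^ (((x' - 1) * (N - 1)) div 4)
           * ((-1) ^ ((x'\<^sup>2 - 1) div 8)) ^ (n - m) * Jacobi s (int x')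
           = Jacobi (int x) (int N)
         \<and> \<bar>s\<bar> < 2 ^ m"
proof -
  define K where "K = n div m - 1"
  define s where "s = int (N div 2 ^ (n - m)) - z K"
  have "Suc K = n div m"
    using assms(1-3) by (auto simp: K_def elim!: dvdE)
  then have "Suc K * m = n" using assms(3) by simp
  then have "K * m = n - m" by simp
  have "0 < x'" using \<open>odd x'\<close> by (rule odd_pos)
  have "x' \<le> x" using assms(9) by simp
  with assms(8) have "x' < 2 ^ m" by linarith
  have cong: "[int N = s * 2 ^ (n - m)] (mod int x')" and "\<bar>s\<bar> < 2 ^ m"
    using montgomery_quotient[OF assms(11) \<open>0 < x'\<close> \<open>x' < 2 ^ m\<close> assms(12,13)[folded K_def]]
      assms(6) \<open>Suc K * m = n\<close>
    unfolding s_def \<open>K * m = n - m\<close> by simp_all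
  have "Jacobi (int x) (int N) = Jacobi 2 (int N) ^ t * reciprocity_sign x' N * Jacobi (int N) (int x')"
    using assms(4,9) by (simp add: Jacobi_mult_left Jacobi_power_left Jacobi_reciprocity[OF assms(10,4)])
  also have "Jacobi (int N) (int x') = Jacobi 2 (int x') ^ (n - m) * Jacobi s (int x')"
    using Jacobi_cong[OF \<open>odd x'\<close> cong] \<open>odd x'\<close> by (simp add: Jacobi_mult_left Jacobi_power_left)
  finally show ?thesis
    using \<open>\<bar>s\<bar> < 2 ^ m\<close> assms(4,10)
    by (simp add: Let_def s_def K_def Jacobi_two reciprocity_sign_eq algebra_simps)
qed

end
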